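(* Let $\{w_k\}_{k\in\mathbb Z}$ be a zero-mean, unit-variance scalar Gaussian white-noise process and define $$x_k=w_k+\sum_{\ell=1}^\infty\frac{1}{1+\ell}w_{k-\ell},\qquad y_k=w_k,\qquad \xi_k=(x_k,y_k)^T.$$ Then the one-step forward prediction error covariance $\inf\mathbb E\{(\xi_0-\hat\xi)(\xi_0-\hat\xi)^*\}$ over $\hat\xi$ (componentwise) in the closed linear span of $\{x_k,y_k:k\le-1\}$ equals $\begin{pmatrix}1&1\\1&1\end{pmatrix}$, while the backward (postdiction) error covariance, i.e. the same infimum over $\hat\xi$ in the closed linear span of $\{x_k,y_k:k\ge1\}$, equals the zero matrix; that is, the process is backward deterministic but not forward deterministic.
   Context: White noise means $\mathbb E\{w_k\bar w_\ell\}=\delta_{k\ell}$. Closed linear spans are taken in the Hilbert space of finite-variance random variables with inner product $\mathbb E\{u\bar v\}$; the infimum is in the sense of the positive-semidefinite order on $2\times2$ Hermitian matrices. *)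

theory Defs
  imports "HOL-Probability.Probability"
begin

definition L2rv :: "'a measure \<Rightarrow> ('a \<Rightarrow> real) set" where
  "L2rv M = {f. f \<in> borel_measurable M \<and> integrable M (\<lambda>\<omega>. (f \<omega>)^2)}"

definition lin_span_rv :: "('a \<Rightarrow> real) set \<Rightarrow> ('a \<Rightarrow> real) set" where
  "lin_span_rv S = {h. \<exists>F c. finite F \<and> F \<subseteq> S \<and> h = (\<lambda>\<omega>. \<Sum>f\<in>F. c f * f \<omega>)}"

definition closed_span_L2 :: "'a measure \<Rightarrow> ('a \<Rightarrow> real) set \<Rightarrow> ('a \<Rightarrow> real) set" where
  "closed_span_L2 M S = {g \<in> L2rv M. \<forall>e>0. \<exists>h\<in>lin_span_rv S.
      (\<integral>\<omega>. (g \<omega> - h \<omega>)^2 \<partial>M) < e}"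

definition err_cov :: "'a measure \<Rightarrow> ('a \<Rightarrow> real^2) \<Rightarrow> ('a \<Rightarrow> real^2) \<Rightarrow> real^2^2" where
  "err_cov M xi xih = (\<chi> i j. \<integral>\<omega>. (xi \<omega> - xih \<omega>) $ i * (xi \<omega> - xih \<omega>) $ j \<partial>M)"

definition loewner_le :: "real^2^2 \<Rightarrow> real^2^2 \<Rightarrow> bool" where
  "loewner_le A B \<longleftrightarrow> (\<forall>z::real^2. z \<bullet> (A *v z) \<le> z \<bullet> (B *v z))"

definition symmetric_mat :: "real^2^2 \<Rightarrow> bool" where
  "symmetric_mat A \<longleftrightarrow> transpose A = A"

definition is_loewner_inf :: "(real^2^2) set \<Rightarrow> real^2^2 \<Rightarrow> bool" where
  "is_loewner_inf S P \<longleftrightarrow> symmetric_mat P \<and> (\<forall>A\<in>S. loewner_le P A) \<and>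
     (\<forall>Q. symmetric_mat Q \<and> (\<forall>A\<in>S. loewner_le Q A) \<longrightarrow> loewner_le Q P)"

end

theory Submission
  imports Defs "HOL-Library.Function_Algebras"
begin

text \<open>
  Prediction: \<open>x_0 - w_0 = \<Sum>_{l\<ge>1} w_{-l} / (1 + l)\<close> lies in the closed past span, while \<open>w_0\<close>
  is orthogonal to every \<open>x_k\<close> and \<open>w_k\<close> with \<open>k < 0\<close>. So for a predictor with past components
  the error quadratic form at \<open>z\<close> is \<open>E ((z_1 + z_2) w_0 + u)^2\<close> with \<open>u\<close> orthogonal to \<open>w_0\<close>,
  which is at least \<open>(z_1 + z_2)^2\<close>; the predictor \<open>(x_0 - w_0, 0)\<close> attains this bound.

  Postdiction: for \<open>k \<ge> 1\<close> the future variable \<open>x_k - \<Sum>_{l<k} w_{k-l} / (1 + l)\<close> has the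
  expansion \<open>\<Sum>_m w_{-m} / (k + m + 1)\<close> in the past innovations. Its \<open>n\<close>-th difference in \<open>k\<close>
  has the coefficients \<open>n! (m + k)! / (m + k + n + 1)! \<le> 1 / ((n + 1) (m + k + 1))\<close>, so \<open>x_0\<close> is
  at mean-square distance \<open>O(1/n^2)\<close> from a finite combination of future variables, and so is \<open>w_0\<close>,
  approximated by \<open>(n + 1) (n + 2)\<close> times the \<open>n\<close>-th difference at \<open>k = 1\<close>. Hence \<open>\<xi>_0\<close> lies in
  the closed future span and the postdiction error \<open>0\<close> is attained.
\<close>

subsection \<open>Square-integrable random variables\<close>

lemma L2rvI: "f \<in> borel_measurable M \<Longrightarrow> integrable M (\<lambda>\<omega>. (f \<omega>)^2) \<Longrightarrow> f \<in> L2rv M"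
  by (simp add: L2rv_def)

lemma L2rv_borel_measurable: "f \<in> L2rv M \<Longrightarrow> f \<in> borel_measurable M"
  by (simp add: L2rv_def)

lemma L2rv_integrable_sq: "f \<in> L2rv M \<Longrightarrow> integrable M (\<lambda>\<omega>. (f \<omega>)^2)"
  by (simp add: L2rv_def)

lemma integrable_mult_L2rv:
  assumes "f \<in> L2rv M" "g \<in> L2rv M"
  shows "integrable M (\<lambda>\<omega>. f \<omega> * g \<omega>)"
proof (rule Bochner_Integration.integrable_bound)
  show "integrable M (\<lambda>\<omega>. (f \<omega>)^2 + (g \<omega>)^2)"
    using assms by (simp add: L2rv_integrable_sq)
  show "(\<lambda>\<omega>. f \<omega> * g \<omega>) \<in> borel_measurable M"
    using assms by (intro borel_measurable_times L2rv_borel_measurable)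
  have "\<bar>a * b\<bar> \<le> a^2 + b^2" for a b :: real
  proof -
    have "2 * (\<bar>a\<bar> * \<bar>b\<bar>) \<le> a^2 + b^2" "0 \<le> \<bar>a\<bar> * \<bar>b\<bar>"
      using sum_squares_bound[of "\<bar>a\<bar>" "\<bar>b\<bar>"] by (simp_all add: mult.assoc)
    then show ?thesis
      unfolding abs_mult by linarith
  qed
  then show "AE \<omega> in M. norm (f \<omega> * g \<omega>) \<le> norm ((f \<omega>)^2 + (g \<omega>)^2)"
    by simp
qed

lemma L2rv_add:
  assumes "f \<in> L2rv M" "g \<in> L2rv M"
  shows "(\<lambda>\<omega>. f \<omega> + g \<omega>) \<in> L2rv M"
proof (rule L2rvI)
  show "(\<lambda>\<omega>. f \<omega> + g \<omega>) \<in> borel_measurable M"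
    using assms[THEN L2rv_borel_measurable] by (rule borel_measurable_add)
  have "integrable M (\<lambda>\<omega>. (f \<omega>)^2 + (g \<omega>)^2 + 2 * (f \<omega> * g \<omega>))"
    using assms by (simp add: L2rv_integrable_sq integrable_mult_L2rv)
  then show "integrable M (\<lambda>\<omega>. (f \<omega> + g \<omega>)^2)"
    by (simp add: power2_sum mult.assoc)
qed

lemma L2rv_cmult:
  assumes "f \<in> L2rv M"
  shows "(\<lambda>\<omega>. c * f \<omega>) \<in> L2rv M"
proof (rule L2rvI)
  show "(\<lambda>\<omega>. c * f \<omega>) \<in> borel_measurable M"
    using assms[THEN L2rv_borel_measurable] by (rule borel_measurable_times[OF borel_measurable_const])
  show "integrable M (\<lambda>\<omega>. (c * f \<omega>)^2)"
    using assms by (simp add: power_mult_distrib L2rv_integrable_sq)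
qed

lemma L2rv_diff: "f \<in> L2rv M \<Longrightarrow> g \<in> L2rv M \<Longrightarrow> (\<lambda>\<omega>. f \<omega> - g \<omega>) \<in> L2rv M"
  using L2rv_add[OF _ L2rv_cmult, of f M g "-1"] by simp

lemma L2rv_zero: "(\<lambda>\<omega>. 0) \<in> L2rv M"
  by (simp add: L2rv_def)

lemma L2rv_sum: "(\<And>i. i \<in> I \<Longrightarrow> f i \<in> L2rv M) \<Longrightarrow> (\<lambda>\<omega>. \<Sum>i\<in>I. f i \<omega>) \<in> L2rv M"
  by (induction I rule: infinite_finite_induct) (auto intro: L2rv_zero L2rv_add)

lemma integral_sq_add:
  assumes "f \<in> L2rv M" "g \<in> L2rv M"
  shows "(\<integral>\<omega>. (f \<omega> + g \<omega>)^2 \<partial>M)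
    = (\<integral>\<omega>. (f \<omega>)^2 \<partial>M) + 2 * (\<integral>\<omega>. f \<omega> * g \<omega> \<partial>M) + (\<integral>\<omega>. (g \<omega>)^2 \<partial>M)"
  using assms by (simp add: power2_sum mult.assoc L2rv_integrable_sq integrable_mult_L2rv)

lemma integral_sq_add_le:
  assumes "f \<in> L2rv M" "g \<in> L2rv M"
  shows "(\<integral>\<omega>. (f \<omega> + g \<omega>)^2 \<partial>M) \<le> 2 * (\<integral>\<omega>. (f \<omega>)^2 \<partial>M) + 2 * (\<integral>\<omega>. (g \<omega>)^2 \<partial>M)"
proof -
  have "(\<integral>\<omega>. (f \<omega> + g \<omega>)^2 \<partial>M) \<le> (\<integral>\<omega>. 2 * (f \<omega>)^2 + 2 * (g \<omega>)^2 \<partial>M)"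
  proof (rule integral_mono)
    show "(f \<omega> + g \<omega>)^2 \<le> 2 * (f \<omega>)^2 + 2 * (g \<omega>)^2" for \<omega>
      using sum_squares_bound[of "f \<omega>" "g \<omega>"] by (simp add: power2_sum)
  qed (use assms in \<open>simp_all add: L2rv_integrable_sq L2rv_add\<close>)
  then show ?thesis
    using assms by (simp add: L2rv_integrable_sq)
qed

lemma discriminant_le_of_nonneg:
  fixes A B C :: real
  assumes "0 \<le> A" and nonneg: "\<And>t. 0 \<le> t^2 * A - 2 * t * B + C"
  shows "B^2 \<le> A * C"
proof (cases "A = 0")
  case True
  have "B = 0"
  proof (rule ccontr)
    assume "B \<noteq> 0"
    then show False
      using nonneg[of "(C + 1) / (2 * B)"] True by (simp add: field_simps)
  qed
  then show ?thesis
    using nonneg[of 0] True by simp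
next
  case False
  with \<open>0 \<le> A\<close> have "0 < A"
    by simp
  then show ?thesis
    using nonneg[of "B / A"] by (simp add: field_simps power2_eq_square)
qed

lemma integral_mult_sq_le:
  assumes f: "f \<in> L2rv M" and g: "g \<in> L2rv M"
  shows "(\<integral>\<omega>. f \<omega> * g \<omega> \<partial>M)^2 \<le> (\<integral>\<omega>. (f \<omega>)^2 \<partial>M) * (\<integral>\<omega>. (g \<omega>)^2 \<partial>M)"
proof (rule discriminant_le_of_nonneg)
  show "0 \<le> (\<integral>\<omega>. (f \<omega>)^2 \<partial>M)"
    by simp
next
  fix t
  have "0 \<le> (\<integral>\<omega>. (t * f \<omega> + (-1) * g \<omega>)^2 \<partial>M)"
    by simp
  also have "\<dots> = (\<integral>\<omega>. (t * f \<omega>)^2 \<partial>M) + 2 * (\<integral>\<omega>. t * f \<omega> * ((-1) * g \<omega>) \<partial>M)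
      + (\<integral>\<omega>. ((-1) * g \<omega>)^2 \<partial>M)"
    using f g by (intro integral_sq_add L2rv_cmult)
  also have "\<dots> = t^2 * (\<integral>\<omega>. (f \<omega>)^2 \<partial>M) - 2 * t * (\<integral>\<omega>. f \<omega> * g \<omega> \<partial>M)
      + (\<integral>\<omega>. (g \<omega>)^2 \<partial>M)"
    unfolding power_mult_distrib by (simp add: mult.assoc)
  finally show "0 \<le> t^2 * (\<integral>\<omega>. (f \<omega>)^2 \<partial>M) - 2 * t * (\<integral>\<omega>. f \<omega> * g \<omega> \<partial>M)
      + (\<integral>\<omega>. (g \<omega>)^2 \<partial>M)" .
qed

subsection \<open>Linear and closed linear spans\<close>

interpretation rv_module: module "\<lambda>(c::real) (f::'a \<Rightarrow> real) \<omega>. c * f \<omega>"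
  by unfold_locales (auto simp: algebra_simps)

lemma sum_fun_apply: "(\<Sum>i\<in>I. f i) x = (\<Sum>i\<in>I. f i x)"
  by (induction I rule: infinite_finite_induct) auto

lemma lin_span_rv_eq_span: "lin_span_rv S = rv_module.span S"
  unfolding lin_span_rv_def rv_module.span_explicit by (auto simp: fun_eq_iff sum_fun_apply)

lemma lin_span_rv_base: "f \<in> S \<Longrightarrow> f \<in> lin_span_rv S"
  unfolding lin_span_rv_eq_span by (rule rv_module.span_base)

lemma lin_span_rv_zero: "(\<lambda>\<omega>. 0) \<in> lin_span_rv S"
  using rv_module.span_zero by (simp add: lin_span_rv_eq_span zero_fun_def)

lemma lin_span_rv_add:
  "g \<in> lin_span_rv S \<Longrightarrow> h \<in> lin_span_rv S \<Longrightarrow> (\<lambda>\<omega>. g \<omega> + h \<omega>) \<in> lin_span_rv S"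
  unfolding lin_span_rv_eq_span using rv_module.span_add by (simp add: plus_fun_def)

lemma lin_span_rv_cmult: "g \<in> lin_span_rv S \<Longrightarrow> (\<lambda>\<omega>. c * g \<omega>) \<in> lin_span_rv S"
  unfolding lin_span_rv_eq_span by (rule rv_module.span_scale)

lemma lin_span_rv_diff:
  "g \<in> lin_span_rv S \<Longrightarrow> h \<in> lin_span_rv S \<Longrightarrow> (\<lambda>\<omega>. g \<omega> - h \<omega>) \<in> lin_span_rv S"
  unfolding lin_span_rv_eq_span using rv_module.span_diff by (simp add: fun_diff_def)

lemma lin_span_rv_sum:
  "(\<And>i. i \<in> I \<Longrightarrow> f i \<in> lin_span_rv S) \<Longrightarrow> (\<lambda>\<omega>. \<Sum>i\<in>I. f i \<omega>) \<in> lin_span_rv S"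
  unfolding lin_span_rv_eq_span using rv_module.span_sum[of I f S]
  by (simp add: fun_eq_iff sum_fun_apply flip: sum_fun_apply)

lemma lin_span_rv_mono: "S \<subseteq> T \<Longrightarrow> lin_span_rv S \<subseteq> lin_span_rv T"
  unfolding lin_span_rv_eq_span by (rule rv_module.span_mono)

lemma lin_span_rv_minimal: "S \<subseteq> T \<Longrightarrow> rv_module.subspace T \<Longrightarrow> lin_span_rv S \<subseteq> T"
  unfolding lin_span_rv_eq_span by (rule rv_module.span_minimal)

lemma closed_span_L2_L2rv: "g \<in> closed_span_L2 M S \<Longrightarrow> g \<in> L2rv M"
  by (simp add: closed_span_L2_def)

lemma closed_span_L2I:
  assumes "g \<in> L2rv M" and "\<And>n. h n \<in> lin_span_rv S"
    and "\<And>n. (\<integral>\<omega>. (g \<omega> - h n \<omega>)^2 \<partial>M) \<le> b n" and "b \<longlonglongrightarrow> 0"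
  shows "g \<in> closed_span_L2 M S"
  unfolding closed_span_L2_def
proof (intro CollectI conjI allI impI assms(1))
  fix e :: real
  assume "e > 0"
  then obtain n where "b n < e"
    using order_tendstoD(2)[OF assms(4)] by (metis eventually_sequentially order_refl)
  then show "\<exists>h\<in>lin_span_rv S. (\<integral>\<omega>. (g \<omega> - h \<omega>)^2 \<partial>M) < e"
    using assms(2,3) by (meson le_less_trans)
qed

lemma closed_span_L2_mono: "S \<subseteq> T \<Longrightarrow> closed_span_L2 M S \<subseteq> closed_span_L2 M T"
  unfolding closed_span_L2_def using lin_span_rv_mono by blast

lemma closed_span_L2_zero: "(\<lambda>\<omega>. 0) \<in> closed_span_L2 M S"
  by (rule closed_span_L2I[where h = "\<lambda>_ _. 0" and b = "\<lambda>_. 0"]) (simp_all add: L2rv_zero lin_span_rv_zero)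

definition L2_orthocompl :: "'a measure \<Rightarrow> ('a \<Rightarrow> real) \<Rightarrow> ('a \<Rightarrow> real) set" where
  "L2_orthocompl M v = {g \<in> L2rv M. (\<integral>\<omega>. v \<omega> * g \<omega> \<partial>M) = 0}"

lemma subspace_L2_orthocompl:
  assumes "v \<in> L2rv M"
  shows "rv_module.subspace (L2_orthocompl M v)"
proof (rule rv_module.subspaceI)
  show "0 \<in> L2_orthocompl M v"
    by (simp add: L2_orthocompl_def L2rv_zero zero_fun_def)
next
  fix f g
  assume "f \<in> L2_orthocompl M v" "g \<in> L2_orthocompl M v"
  then show "f + g \<in> L2_orthocompl M v"
    using assms by (simp add: L2_orthocompl_def plus_fun_def distrib_left L2rv_add integrable_mult_L2rv)
next
  fix c f
  assume "f \<in> L2_orthocompl M v"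
  then show "(\<lambda>\<omega>. c * f \<omega>) \<in> L2_orthocompl M v"
    by (simp add: L2_orthocompl_def L2rv_cmult mult.left_commute[of _ c])
qed

lemma L2_orthocompl_closed:
  assumes v: "v \<in> L2rv M" and g: "g \<in> L2rv M"
    and approx: "\<And>e. e > 0 \<Longrightarrow> \<exists>h\<in>L2_orthocompl M v. (\<integral>\<omega>. (g \<omega> - h \<omega>)^2 \<partial>M) < e"
  shows "g \<in> L2_orthocompl M v"
proof -
  define V where "V = (\<integral>\<omega>. (v \<omega>)^2 \<partial>M)"
  have "V \<ge> 0"
    by (simp add: V_def)
  have "(\<integral>\<omega>. v \<omega> * g \<omega> \<partial>M)^2 \<le> 0 + e" if "e > 0" for e
  proof -
    obtain h where h: "h \<in> L2_orthocompl M v" and close: "(\<integral>\<omega>. (g \<omega> - h \<omega>)^2 \<partial>M) < e / (V + 1)"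
      using approx[of "e / (V + 1)"] \<open>e > 0\<close> \<open>V \<ge> 0\<close> by auto
    have "h \<in> L2rv M" and "(\<integral>\<omega>. v \<omega> * h \<omega> \<partial>M) = 0"
      using h by (simp_all add: L2_orthocompl_def)
    then have "(\<integral>\<omega>. v \<omega> * g \<omega> \<partial>M) = (\<integral>\<omega>. v \<omega> * (g \<omega> - h \<omega>) \<partial>M)"
      using v g by (simp add: right_diff_distrib integrable_mult_L2rv)
    then have "(\<integral>\<omega>. v \<omega> * g \<omega> \<partial>M)^2 \<le> V * (\<integral>\<omega>. (g \<omega> - h \<omega>)^2 \<partial>M)"
      unfolding V_def using v g \<open>h \<in> L2rv M\<close> by (simp add: integral_mult_sq_le L2rv_diff)
    also have "\<dots> \<le> V * (e / (V + 1))"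
      using close \<open>V \<ge> 0\<close> by (intro mult_left_mono) auto
    also have "\<dots> \<le> e"
      using \<open>e > 0\<close> \<open>V \<ge> 0\<close> by (simp add: field_simps)
    finally show ?thesis
      by simp
  qed
  then have "(\<integral>\<omega>. v \<omega> * g \<omega> \<partial>M)^2 \<le> 0"
    by (rule field_le_epsilon)
  then show ?thesis
    using g by (simp add: L2_orthocompl_def)
qed

lemma closed_span_L2_subset_orthocompl:
  assumes v: "v \<in> L2rv M" and S: "S \<subseteq> L2_orthocompl M v"
  shows "closed_span_L2 M S \<subseteq> L2_orthocompl M v"
proof
  fix g
  assume g: "g \<in> closed_span_L2 M S"
  have "lin_span_rv S \<subseteq> L2_orthocompl M v"
    by (rule lin_span_rv_minimal[OF S subspace_L2_orthocompl[OF v]])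
  with g show "g \<in> L2_orthocompl M v"
    by (intro L2_orthocompl_closed[OF v closed_span_L2_L2rv[OF g]]) (fastforce simp: closed_span_L2_def)
qed

lemma integral_sq_add_orthocompl:
  assumes v: "v \<in> L2rv M" and u: "u \<in> L2_orthocompl M v"
  shows "(\<integral>\<omega>. (c * v \<omega> + u \<omega>)^2 \<partial>M) = c^2 * (\<integral>\<omega>. (v \<omega>)^2 \<partial>M) + (\<integral>\<omega>. (u \<omega>)^2 \<partial>M)"
proof -
  have "u \<in> L2rv M" "(\<integral>\<omega>. v \<omega> * u \<omega> \<partial>M) = 0"
    using u by (simp_all add: L2_orthocompl_def)
  then show ?thesis
    using integral_sq_add[OF L2rv_cmult[OF v] \<open>u \<in> L2rv M\<close>, of c] by (simp add: power_mult_distrib mult.assoc)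
qed

subsection \<open>Beta coefficients\<close>

lemma fact_add_mult_fact_add_le:
  "(fact (n + p) * fact (m + p) :: 'a :: linordered_semidom) \<le> fact p * fact (n + m + p)"
proof (induction m)
  case 0
  then show ?case
    by (simp add: mult.commute)
next
  case (Suc m)
  have "(fact (n + p) * fact (Suc m + p) :: 'a) = fact (n + p) * fact (m + p) * of_nat (Suc (m + p))"
    by (simp add: algebra_simps)
  also have "\<dots> \<le> fact p * fact (n + m + p) * of_nat (Suc (n + m + p))"
    by (intro mult_mono Suc.IH) auto
  also have "\<dots> = fact p * fact (n + Suc m + p)"
    by (simp add: algebra_simps)
  finally show ?case .
qed

text \<open>\<open>beta_coeff n a = \<integral>\<^sub>0\<^sup>1 t\<^sup>a (1 - t)\<^sup>n dt\<close>.\<close>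

definition beta_coeff :: "nat \<Rightarrow> nat \<Rightarrow> real" where
  "beta_coeff n a = fact n * fact a / fact (a + n + 1)"

lemma beta_coeff_nonneg: "beta_coeff n a \<ge> 0"
  by (simp add: beta_coeff_def)

lemma beta_coeff_0: "beta_coeff 0 a = 1 / (real a + 1)"
proof -
  have "fact (a + 0 + 1) = (real a + 1) * (fact a :: real)"
    by simp
  then show ?thesis
    unfolding beta_coeff_def by simp
qed

lemma beta_coeff_diff: "beta_coeff n a - beta_coeff n (Suc a) = beta_coeff (Suc n) a"
proof -
  define F :: real where "F = fact (a + n + 1)"
  have pos: "F > 0" "real a + real n + 2 > 0"
    by (simp_all add: F_def)
  have facts: "fact (Suc a + n + 1) = (real a + real n + 2) * F"
    "fact (a + Suc n + 1) = (real a + real n + 2) * F"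
    "fact (Suc a) = (real a + 1) * (fact a :: real)" "fact (Suc n) = (real n + 1) * (fact n :: real)"
    by (simp_all add: F_def algebra_simps)
  have "beta_coeff n a - beta_coeff n (Suc a)
      = fact n * fact a / F - fact n * ((real a + 1) * fact a) / ((real a + real n + 2) * F)"
    unfolding beta_coeff_def facts by (simp add: F_def)
  also have "\<dots> = ((real a + real n + 2) * (fact n * fact a) - fact n * ((real a + 1) * fact a))
      / ((real a + real n + 2) * F)"
    using pos by (simp add: diff_divide_distrib)
  also have "\<dots> = (real n + 1) * fact n * fact a / ((real a + real n + 2) * F)"
    by (simp add: algebra_simps)
  also have "\<dots> = beta_coeff (Suc n) a"
    unfolding beta_coeff_def facts by (simp add: algebra_simps)
  finally show ?thesis .
qed

lemma beta_coeff_le: "beta_coeff n m \<le> 1 / ((real n + 1) * (real m + 1))"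
proof -
  have "(fact (n + 1) * fact (m + 1) :: real) \<le> fact 1 * fact (n + m + 1)"
    by (rule fact_add_mult_fact_add_le)
  then have "fact n * fact m * ((real n + 1) * (real m + 1)) \<le> (fact (m + n + 1) :: real)"
    by (simp add: algebra_simps)
  then have "fact n * fact m / fact (m + n + 1) \<le> 1 / ((real n + 1) * (real m + 1))"
    by (simp add: divide_le_eq le_divide_eq mult.commute)
  then show ?thesis
    by (simp add: beta_coeff_def)
qed

lemma beta_coeff_1: "(real n + 1) * (real n + 2) * beta_coeff n 1 = 1"
proof -
  have "fact (1 + n + 1) = (real n + 1) * (real n + 2) * (fact n :: real)"
    by (simp add: algebra_simps)
  then show ?thesis
    unfolding beta_coeff_def by simp
qed

lemma beta_coeff_Suc_Suc_le:
  "(real n + 1) * (real n + 2) * beta_coeff n (Suc (Suc j)) \<le> 6 / ((real n + 1) * (real j + 2))"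
proof -
  define X :: real where "X = (real n + 1) * (real n + 2) * fact n * fact (Suc (Suc j))"
  define F :: real where "F = fact (Suc (Suc j) + n + 1)"
  have "(fact (n + 3) * fact (j + 3) :: real) \<le> fact 3 * fact (n + j + 3)"
    by (rule fact_add_mult_fact_add_le)
  then have "X * ((real n + 3) * (real j + 3)) \<le> 6 * F"
    by (simp add: X_def F_def numeral_eq_Suc algebra_simps)
  then have "X / F \<le> 6 / ((real n + 3) * (real j + 3))"
    by (simp add: F_def divide_le_eq le_divide_eq mult.commute)
  also have "\<dots> \<le> 6 / ((real n + 1) * (real j + 2))"
    by (intro divide_left_mono mult_mono) auto
  finally show ?thesis
    by (simp add: beta_coeff_def X_def F_def)
qed

lemma sum_shift_split:
  fixes g :: "nat \<Rightarrow> real"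
  shows "g 0 + (\<Sum>l=1..L+k. g l) = (\<Sum>l<k. g l) + (\<Sum>m\<le>L. g (m + k))"
proof -
  have "g 0 + (\<Sum>l=1..L+k. g l) = (\<Sum>l=0..L+k. g l)"
    by (simp add: sum.atLeast_Suc_atMost)
  also have "{0..L+k} = {..<k} \<union> {k..L+k}"
    by auto
  also have "(\<Sum>l\<in>{..<k} \<union> {k..L+k}. g l) = (\<Sum>l<k. g l) + (\<Sum>l=k..L+k. g l)"
    by (rule sum.union_disjoint) auto
  also have "(\<Sum>l=k..L+k. g l) = (\<Sum>m\<le>L. g (m + k))"
    using sum.shift_bounds_cl_nat_ivl[of g 0 k L] by (simp add: atLeast0AtMost)
  finally show ?thesis .
qed

lemma tendsto_const_div_Suc: "(\<lambda>n. c / (real n + 1)) \<longlonglongrightarrow> 0"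
  using tendsto_mult_right_zero[OF LIMSEQ_inverse_real_of_nat, of c]
  by (simp add: divide_inverse add.commute)

subsection \<open>Covariance matrices and orthonormal expansions\<close>

lemma inner_cov_matrix:
  fixes E :: "'a \<Rightarrow> real^'n"
  assumes "\<And>i. (\<lambda>\<omega>. E \<omega> $ i) \<in> L2rv M"
  shows "z \<bullet> ((\<chi> i j. \<integral>\<omega>. E \<omega> $ i * E \<omega> $ j \<partial>M) *v z) = (\<integral>\<omega>. (z \<bullet> E \<omega>)^2 \<partial>M)"
proof -
  have "(\<integral>\<omega>. (z \<bullet> E \<omega>)^2 \<partial>M) = (\<integral>\<omega>. (\<Sum>i\<in>UNIV. \<Sum>j\<in>UNIV. z$i * E \<omega> $ i * (z$j * E \<omega> $ j)) \<partial>M)"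
    unfolding inner_vec_def inner_real_def power2_eq_square sum_product ..
  also have "\<dots> = (\<integral>\<omega>. (\<Sum>i\<in>UNIV. \<Sum>j\<in>UNIV. z$i * z$j * (E \<omega> $ i * E \<omega> $ j)) \<partial>M)"
    by (simp only: mult_ac)
  also have "\<dots> = (\<Sum>i\<in>UNIV. \<Sum>j\<in>UNIV. z$i * z$j * (\<integral>\<omega>. E \<omega> $ i * E \<omega> $ j \<partial>M))"
    using integrable_mult_L2rv[OF assms assms]
    by (simp add: Bochner_Integration.integral_sum Bochner_Integration.integrable_sum)
  also have "\<dots> = z \<bullet> ((\<chi> i j. \<integral>\<omega>. E \<omega> $ i * E \<omega> $ j \<partial>M) *v z)"
    by (simp add: inner_vec_def matrix_vector_mult_def sum_distrib_left ac_simps)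
  finally show ?thesis ..
qed

lemma is_loewner_infI_least:
  assumes "P \<in> S" "symmetric_mat P" "\<And>A. A \<in> S \<Longrightarrow> loewner_le P A"
  shows "is_loewner_inf S P"
  using assms unfolding is_loewner_inf_def by blast

lemma loewner_le_zero_err_cov:
  assumes "\<And>i. (\<lambda>\<omega>. (xi \<omega> - xih \<omega>) $ i) \<in> L2rv M"
  shows "loewner_le 0 (err_cov M xi xih)"
  unfolding loewner_le_def err_cov_def inner_cov_matrix[OF assms] by simp

locale orthonormal_seq =
  fixes M :: "'a measure" and w :: "int \<Rightarrow> 'a \<Rightarrow> real"
  assumes w_L2rv: "w k \<in> L2rv M"
    and w_inner: "(\<integral>\<omega>. w i \<omega> * w j \<omega> \<partial>M) = (if i = j then 1 else 0)"

lemma (in prob_space) orthonormal_seq_std_normal: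
  assumes gauss: "\<And>k. distributed M lborel (w k) std_normal_density"
    and indep: "indep_vars (\<lambda>_. borel) w UNIV"
  shows "orthonormal_seq M w"
proof
  have integrable: "integrable M (\<lambda>\<omega>. (w k \<omega>)^p)" if "p \<le> 2" for k p
  proof -
    have "integrable lborel (\<lambda>x. std_normal_density x * x ^ p)"
      using integrable_std_normal_moment[of p] by (simp add: mult.commute)
    then show ?thesis
      using distributed_integrable[OF gauss[of k], of "\<lambda>x. x ^ p"] by (simp add: normal_density_nonneg)
  qed
  have mean: "(\<integral>\<omega>. w k \<omega> \<partial>M) = 0" for k
    using standard_normal_distributed_expectation[OF gauss[of k]] by simp
  show "w k \<in> L2rv M" for k
    using integrable[of 2 k] distributed_measurable[OF gauss[of k]] by (simp add: L2rv_def)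
  show "(\<integral>\<omega>. w i \<omega> * w j \<omega> \<partial>M) = (if i = j then 1 else 0)" for i j
  proof (cases "i = j")
    case True
    then show ?thesis
      using standard_normal_distributed_variance[OF gauss[of j]] mean[of j] by (simp add: power2_eq_square)
  next
    case False
    have "indep_vars (\<lambda>_. borel) w {i, j}"
      by (rule indep_vars_subset[OF indep]) auto
    then have "(\<integral>\<omega>. (\<Prod>t\<in>{i, j}. w t \<omega>) \<partial>M) = (\<Prod>t\<in>{i, j}. \<integral>\<omega>. w t \<omega> \<partial>M)"
      using integrable[of 1] by (intro indep_vars_lebesgue_integral) auto
    with False show ?thesis
      by (simp add: mean)
  qed
qed

context orthonormal_seq
begin

lemma integral_sq_sum_orthonormal:
  assumes "finite F" "inj_on \<phi> F"
  shows "(\<integral>\<omega>. (\<Sum>m\<in>F. a m * w (\<phi> m) \<omega>)^2 \<partial>M) = (\<Sum>m\<in>F. (a m)^2)"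
proof -
  have "(\<integral>\<omega>. (\<Sum>m\<in>F. a m * w (\<phi> m) \<omega>)^2 \<partial>M)
      = (\<integral>\<omega>. (\<Sum>m\<in>F. \<Sum>n\<in>F. a m * w (\<phi> m) \<omega> * (a n * w (\<phi> n) \<omega>)) \<partial>M)"
    unfolding power2_eq_square sum_product ..
  also have "\<dots> = (\<integral>\<omega>. (\<Sum>m\<in>F. \<Sum>n\<in>F. a m * a n * (w (\<phi> m) \<omega> * w (\<phi> n) \<omega>)) \<partial>M)"
    by (simp only: mult_ac)
  also have "\<dots> = (\<Sum>m\<in>F. \<Sum>n\<in>F. a m * a n * (\<integral>\<omega>. w (\<phi> m) \<omega> * w (\<phi> n) \<omega> \<partial>M))"
    using integrable_mult_L2rv[OF w_L2rv w_L2rv]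
    by (simp add: Bochner_Integration.integral_sum Bochner_Integration.integrable_sum)
  also have "\<dots> = (\<Sum>m\<in>F. \<Sum>n\<in>F. if m = n then (a m)^2 else 0)"
    using assms(2) by (intro sum.cong refl) (auto simp: w_inner inj_on_def power2_eq_square dest: inj_onD)
  also have "\<dots> = (\<Sum>m\<in>F. (a m)^2)"
    using assms(1) by simp
  finally show ?thesis .
qed

definition w_partial_sum :: "(nat \<Rightarrow> real) \<Rightarrow> nat \<Rightarrow> 'a \<Rightarrow> real" where
  "w_partial_sum a L = (\<lambda>\<omega>. \<Sum>m\<le>L. a m * w (- int m) \<omega>)"

lemma w_partial_sum_L2rv: "w_partial_sum a L \<in> L2rv M"
  unfolding w_partial_sum_def by (intro L2rv_sum L2rv_cmult w_L2rv)

lemma integral_sq_w_partial_sum: "(\<integral>\<omega>. (w_partial_sum a L \<omega>)^2 \<partial>M) = (\<Sum>m\<le>L. (a m)^2)"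
  unfolding w_partial_sum_def by (rule integral_sq_sum_orthonormal) (auto simp: inj_on_def)

definition has_expansion :: "('a \<Rightarrow> real) \<Rightarrow> (nat \<Rightarrow> real) \<Rightarrow> bool" where
  "has_expansion g a \<longleftrightarrow> g \<in> L2rv M \<and> (\<lambda>L. \<integral>\<omega>. (g \<omega> - w_partial_sum a L \<omega>)^2 \<partial>M) \<longlonglongrightarrow> 0"

lemma has_expansion_diff:
  assumes g: "has_expansion g a" and h: "has_expansion h b"
  shows "has_expansion (\<lambda>\<omega>. g \<omega> - h \<omega>) (\<lambda>m. a m - b m)"
proof -
  have L2: "g \<in> L2rv M" "h \<in> L2rv M"
    using g h by (simp_all add: has_expansion_def)
  have bound: "(\<integral>\<omega>. (g \<omega> - h \<omega> - w_partial_sum (\<lambda>m. a m - b m) L \<omega>)^2 \<partial>M)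
      \<le> 2 * (\<integral>\<omega>. (g \<omega> - w_partial_sum a L \<omega>)^2 \<partial>M) + 2 * (\<integral>\<omega>. (w_partial_sum b L \<omega> - h \<omega>)^2 \<partial>M)"
    for L
  proof -
    have "(\<lambda>\<omega>. (g \<omega> - h \<omega> - w_partial_sum (\<lambda>m. a m - b m) L \<omega>)^2)
        = (\<lambda>\<omega>. ((g \<omega> - w_partial_sum a L \<omega>) + (w_partial_sum b L \<omega> - h \<omega>))^2)"
      by (auto simp: w_partial_sum_def algebra_simps sum_subtractf)
    then show ?thesis
      using integral_sq_add_le[OF L2rv_diff[OF L2(1) w_partial_sum_L2rv[of a L]]
          L2rv_diff[OF w_partial_sum_L2rv[of b L] L2(2)]]
      by simp
  qed
  have "(\<lambda>L. 2 * (\<integral>\<omega>. (g \<omega> - w_partial_sum a L \<omega>)^2 \<partial>M)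
      + 2 * (\<integral>\<omega>. (w_partial_sum b L \<omega> - h \<omega>)^2 \<partial>M)) \<longlonglongrightarrow> 2 * 0 + 2 * 0"
    using g h unfolding has_expansion_def power2_commute[of "w_partial_sum b _ _"]
    by (intro tendsto_intros) auto
  then have lim: "(\<lambda>L. 2 * (\<integral>\<omega>. (g \<omega> - w_partial_sum a L \<omega>)^2 \<partial>M)
      + 2 * (\<integral>\<omega>. (w_partial_sum b L \<omega> - h \<omega>)^2 \<partial>M)) \<longlonglongrightarrow> 0"
    by simp
  have "(\<lambda>L. \<integral>\<omega>. (g \<omega> - h \<omega> - w_partial_sum (\<lambda>m. a m - b m) L \<omega>)^2 \<partial>M) \<longlonglongrightarrow> 0"
    by (rule tendsto_sandwich[OF always_eventually always_eventually tendsto_const lim]) (simp_all add: bound)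
  with L2 show ?thesis
    by (simp add: has_expansion_def L2rv_diff)
qed

lemma has_expansion_cmult:
  assumes "has_expansion g a"
  shows "has_expansion (\<lambda>\<omega>. c * g \<omega>) (\<lambda>m. c * a m)"
proof -
  have "(\<lambda>\<omega>. (c * g \<omega> - w_partial_sum (\<lambda>m. c * a m) L \<omega>)^2)
      = (\<lambda>\<omega>. c^2 * (g \<omega> - w_partial_sum a L \<omega>)^2)" for L
    by (simp add: w_partial_sum_def fun_eq_iff power_mult_distrib mult.assoc
        flip: sum_distrib_left right_diff_distrib)
  then have "(\<integral>\<omega>. (c * g \<omega> - w_partial_sum (\<lambda>m. c * a m) L \<omega>)^2 \<partial>M)
      = c^2 * (\<integral>\<omega>. (g \<omega> - w_partial_sum a L \<omega>)^2 \<partial>M)" for L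
    by simp
  moreover have "(\<lambda>L. c^2 * (\<integral>\<omega>. (g \<omega> - w_partial_sum a L \<omega>)^2 \<partial>M)) \<longlonglongrightarrow> c^2 * 0"
    using assms by (intro tendsto_intros) (simp add: has_expansion_def)
  ultimately show ?thesis
    using assms by (simp add: has_expansion_def L2rv_cmult)
qed

lemma has_expansion_integral_sq_le:
  assumes g: "has_expansion g a" and a: "\<And>m. \<bar>a m\<bar> \<le> K / (real m + 1)"
  shows "(\<integral>\<omega>. (g \<omega>)^2 \<partial>M) \<le> 2 * K^2 * (\<Sum>m. 1 / (real m + 1)^2)"
proof -
  have "summable (\<lambda>m. inverse (real m ^ 2))"
    by (rule inverse_power_summable) simp
  then have "summable (\<lambda>m. 1 / (real m + 1)^2)"
    by (subst (asm) summable_Suc_iff [symmetric]) (simp add: divide_inverse add.commute)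
  then have summable: "summable (\<lambda>m. K^2 * (1 / (real m + 1)^2))"
    and suminf: "(\<Sum>m. K^2 * (1 / (real m + 1)^2)) = K^2 * (\<Sum>m. 1 / (real m + 1)^2)"
    by (rule summable_mult, rule suminf_mult)
  have L2: "g \<in> L2rv M"
    using g by (simp add: has_expansion_def)
  have "(\<integral>\<omega>. (g \<omega>)^2 \<partial>M) \<le> 2 * (\<integral>\<omega>. (g \<omega> - w_partial_sum a L \<omega>)^2 \<partial>M) + 2 * K^2 * (\<Sum>m. 1 / (real m + 1)^2)"
    for L
  proof -
    have "(\<integral>\<omega>. (g \<omega>)^2 \<partial>M) = (\<integral>\<omega>. ((g \<omega> - w_partial_sum a L \<omega>) + w_partial_sum a L \<omega>)^2 \<partial>M)"
      by simp
    also have "\<dots> \<le> 2 * (\<integral>\<omega>. (g \<omega> - w_partial_sum a L \<omega>)^2 \<partial>M) + 2 * (\<Sum>m\<le>L. (a m)^2)"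
      using integral_sq_add_le[OF L2rv_diff[OF L2 w_partial_sum_L2rv[of a L]] w_partial_sum_L2rv[of a L]]
      by (simp add: integral_sq_w_partial_sum)
    also have "(\<Sum>m\<le>L. (a m)^2) \<le> (\<Sum>m\<le>L. K^2 * (1 / (real m + 1)^2))"
    proof (rule sum_mono)
      fix m
      have "\<bar>a m\<bar>^2 \<le> (K / (real m + 1))^2"
        using a[of m] by (intro power_mono) auto
      then show "(a m)^2 \<le> K^2 * (1 / (real m + 1)^2)"
        by (simp add: power_divide)
    qed
    also have "\<dots> \<le> K^2 * (\<Sum>m. 1 / (real m + 1)^2)"
      unfolding suminf [symmetric] by (rule sum_le_suminf[OF summable]) auto
    finally show ?thesis
      by simp
  qed
  moreover have "(\<lambda>L. 2 * (\<integral>\<omega>. (g \<omega> - w_partial_sum a L \<omega>)^2 \<partial>M) + 2 * K^2 * (\<Sum>m. 1 / (real m + 1)^2))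
      \<longlonglongrightarrow> 2 * 0 + 2 * K^2 * (\<Sum>m. 1 / (real m + 1)^2)"
    using g unfolding has_expansion_def by (intro tendsto_intros) auto
  ultimately show ?thesis
    by (intro LIMSEQ_le_const) auto
qed

end

subsection \<open>The harmonic moving average\<close>

locale harmonic_ma = orthonormal_seq +
  fixes x :: "int \<Rightarrow> 'a \<Rightarrow> real"
  assumes x_L2rv: "x k \<in> L2rv M"
    and x_series: "(\<lambda>n. \<integral>\<omega>. (x k \<omega> - (w k \<omega> +
            (\<Sum>l=1..n. w (k - int l) \<omega> / (1 + real l))))^2 \<partial>M) \<longlonglongrightarrow> 0"
begin

abbreviation past :: "('a \<Rightarrow> real) set" where
  "past \<equiv> {x k | k. k \<le> -1} \<union> {w k | k. k \<le> -1}"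

abbreviation future :: "('a \<Rightarrow> real) set" where
  "future \<equiv> {x k | k. k \<ge> 1} \<union> {w k | k. k \<ge> 1}"

abbreviation xi :: "'a \<Rightarrow> real^2" where
  "xi \<equiv> \<lambda>\<omega>. \<chi> i. if i = 1 then x 0 \<omega> else w 0 \<omega>"

lemma xi_minus_L2rv:
  assumes "\<And>i. (\<lambda>\<omega>. xih \<omega> $ i) \<in> L2rv M"
  shows "(\<lambda>\<omega>. (xi \<omega> - xih \<omega>) $ i) \<in> L2rv M"
  using exhaust_2[of i] by (auto intro!: L2rv_diff x_L2rv w_L2rv assms)

lemma x_minus_w_in_closed_span: "(\<lambda>\<omega>. x k \<omega> - w k \<omega>) \<in> closed_span_L2 M {w j | j. j < k}"
proof (rule closed_span_L2I[where h = "\<lambda>n \<omega>. \<Sum>l=1..n. (1 / (1 + real l)) * w (k - int l) \<omega>"])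
  show "(\<lambda>\<omega>. x k \<omega> - w k \<omega>) \<in> L2rv M"
    by (intro L2rv_diff x_L2rv w_L2rv)
  show "(\<lambda>\<omega>. \<Sum>l=1..n. (1 / (1 + real l)) * w (k - int l) \<omega>) \<in> lin_span_rv {w j | j. j < k}" for n
    by (intro lin_span_rv_sum lin_span_rv_cmult lin_span_rv_base) auto
  show "(\<integral>\<omega>. (x k \<omega> - w k \<omega> - (\<Sum>l=1..n. (1 / (1 + real l)) * w (k - int l) \<omega>))^2 \<partial>M)
      \<le> (\<integral>\<omega>. (x k \<omega> - (w k \<omega> + (\<Sum>l=1..n. w (k - int l) \<omega> / (1 + real l))))^2 \<partial>M)" for n
    by (simp add: diff_diff_eq)
qed (rule x_series)

lemma integral_w_mult_x:
  assumes "k < j"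
  shows "(\<integral>\<omega>. w j \<omega> * x k \<omega> \<partial>M) = 0"
proof -
  have "{w i | i. i < k} \<subseteq> L2_orthocompl M (w j)"
    using assms by (auto simp: L2_orthocompl_def w_L2rv w_inner)
  then have "(\<lambda>\<omega>. x k \<omega> - w k \<omega>) \<in> L2_orthocompl M (w j)"
    using closed_span_L2_subset_orthocompl[OF w_L2rv] x_minus_w_in_closed_span by blast
  then show ?thesis
    using assms w_inner[of j k]
    by (simp add: L2_orthocompl_def right_diff_distrib integrable_mult_L2rv w_L2rv x_L2rv)
qed

lemma closed_span_past_orthocompl_w0: "closed_span_L2 M past \<subseteq> L2_orthocompl M (w 0)"
  by (rule closed_span_L2_subset_orthocompl[OF w_L2rv])
     (auto simp: L2_orthocompl_def x_L2rv w_L2rv w_inner integral_w_mult_x)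

lemma x0_minus_w0_in_closed_span_past: "(\<lambda>\<omega>. x 0 \<omega> - w 0 \<omega>) \<in> closed_span_L2 M past"
  using x_minus_w_in_closed_span[of 0] closed_span_L2_mono[of "{w j | j. j < 0}" past M] by force

lemma forward_error_ge:
  assumes h: "\<And>i. (\<lambda>\<omega>. xih \<omega> $ i) \<in> closed_span_L2 M past"
  shows "loewner_le (\<chi> i j. 1) (err_cov M xi xih)"
  unfolding loewner_le_def
proof
  fix z :: "real^2"
  define u where "u = (\<lambda>\<omega>. z$1 * (x 0 \<omega> - w 0 \<omega> - xih \<omega> $ 1) + (- z$2) * xih \<omega> $ 2)"
  have u: "u \<in> L2_orthocompl M (w 0)"
  proof -
    have sub: "rv_module.subspace (L2_orthocompl M (w 0))"
      by (rule subspace_L2_orthocompl[OF w_L2rv])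
    have xw: "(\<lambda>\<omega>. x 0 \<omega> - w 0 \<omega>) \<in> L2_orthocompl M (w 0)"
      and xih: "(\<lambda>\<omega>. xih \<omega> $ i) \<in> L2_orthocompl M (w 0)" for i
      using closed_span_past_orthocompl_w0 x0_minus_w0_in_closed_span_past h by blast+
    have "(\<lambda>\<omega>. x 0 \<omega> - w 0 \<omega> - xih \<omega> $ 1) \<in> L2_orthocompl M (w 0)"
      using rv_module.subspace_diff[OF sub xw xih] by (simp add: fun_diff_def)
    then show ?thesis
      unfolding u_def
      by (intro rv_module.subspace_add[OF sub, unfolded plus_fun_def] rv_module.subspace_scale[OF sub] xih)
  qed
  have "(2::2) \<noteq> 1"
    by simp
  then have decomp: "z \<bullet> (xi \<omega> - xih \<omega>) = (z$1 + z$2) * w 0 \<omega> + u \<omega>" for \<omega>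
    by (simp add: inner_vec_def sum_2 u_def algebra_simps)
  have "(\<lambda>\<omega>. (xi \<omega> - xih \<omega>) $ i) \<in> L2rv M" for i
    using h by (intro xi_minus_L2rv closed_span_L2_L2rv)
  then have "z \<bullet> (err_cov M xi xih *v z) = (\<integral>\<omega>. (z \<bullet> (xi \<omega> - xih \<omega>))^2 \<partial>M)"
    unfolding err_cov_def by (rule inner_cov_matrix)
  also have "\<dots> = (z$1 + z$2)^2 + (\<integral>\<omega>. (u \<omega>)^2 \<partial>M)"
    unfolding decomp integral_sq_add_orthocompl[OF w_L2rv u] w_inner[of 0 0, folded power2_eq_square] by simp
  also have "\<dots> \<ge> (z$1 + z$2)^2"
    by simp
  also have "(z$1 + z$2)^2 = z \<bullet> ((\<chi> i j. 1) *v z)"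
    by (simp add: inner_vec_def matrix_vector_mult_def sum_2 power2_eq_square algebra_simps)
  finally show "z \<bullet> ((\<chi> i j. 1) *v z) \<le> z \<bullet> (err_cov M xi xih *v z)" .
qed

theorem forward_inf:
  "is_loewner_inf {err_cov M xi xih | xih. \<forall>i. (\<lambda>\<omega>. xih \<omega> $ i) \<in> closed_span_L2 M past} (\<chi> i j. 1)"
proof (rule is_loewner_infI_least)
  let ?xih = "\<lambda>\<omega>. \<chi> i. if i = 1 then x 0 \<omega> - w 0 \<omega> else 0"
  have "(xi \<omega> - ?xih \<omega>) $ i = w 0 \<omega>" for \<omega> i
    by (cases "i = 1") simp_all
  then have "err_cov M xi ?xih = (\<chi> i j. 1)"
    using w_inner[of 0 0] by (simp add: err_cov_def)
  moreover have "(\<lambda>\<omega>. ?xih \<omega> $ i) \<in> closed_span_L2 M past" for i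
    using x0_minus_w0_in_closed_span_past closed_span_L2_zero by (cases "i = 1") simp_all
  ultimately show "(\<chi> i j. 1) \<in> {err_cov M xi xih | xih. \<forall>i. (\<lambda>\<omega>. xih \<omega> $ i) \<in> closed_span_L2 M past}"
    by (auto intro!: exI[of _ ?xih])
  show "symmetric_mat (\<chi> i j. 1)"
    by (simp add: symmetric_mat_def transpose_def)
qed (auto intro: forward_error_ge)

definition x_tail :: "nat \<Rightarrow> 'a \<Rightarrow> real" where
  "x_tail k = (\<lambda>\<omega>. x (int k) \<omega> - (\<Sum>l<k. w (int k - int l) \<omega> / (1 + real l)))"

primrec x_tail_diff :: "nat \<Rightarrow> nat \<Rightarrow> 'a \<Rightarrow> real" where
  "x_tail_diff 0 k = x_tail k"
| "x_tail_diff (Suc n) k = (\<lambda>\<omega>. x_tail_diff n k \<omega> - x_tail_diff n (Suc k) \<omega>)"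

lemma has_expansion_x_tail: "has_expansion (x_tail k) (\<lambda>m. 1 / (real k + real m + 1))"
proof -
  have "x_tail k \<omega> - w_partial_sum (\<lambda>m. 1 / (real k + real m + 1)) L \<omega>
      = x (int k) \<omega> - (w (int k) \<omega> + (\<Sum>l=1..L+k. w (int k - int l) \<omega> / (1 + real l)))" for L \<omega>
    using sum_shift_split[of "\<lambda>l. w (int k - int l) \<omega> / (1 + real l)" L k]
    by (simp add: x_tail_def w_partial_sum_def algebra_simps)
  moreover have "x_tail k \<in> L2rv M"
    unfolding x_tail_def by (intro L2rv_diff L2rv_sum x_L2rv) (simp add: divide_inverse L2rv_cmult w_L2rv mult.commute)
  ultimately show ?thesis
    using LIMSEQ_ignore_initial_segment[OF x_series[of "int k"], of k] by (simp add: has_expansion_def)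
qed

lemma has_expansion_x_tail_diff: "has_expansion (x_tail_diff n k) (\<lambda>m. beta_coeff n (m + k))"
proof (induction n arbitrary: k)
  case 0
  show ?case
    using has_expansion_x_tail[of k] by (simp add: beta_coeff_0 ac_simps)
next
  case (Suc n)
  show ?case
    using has_expansion_diff[OF Suc.IH[of k] Suc.IH[of "Suc k"]] by (simp add: beta_coeff_diff)
qed

lemma has_expansion_w0: "has_expansion (w 0) (\<lambda>m. if m = 0 then 1 else 0)"
proof -
  have "w_partial_sum (\<lambda>m. if m = 0 then 1 else 0) L \<omega> = (\<Sum>m\<le>L. if m = 0 then w (- int m) \<omega> else 0)"
    for L \<omega>
    unfolding w_partial_sum_def by (intro sum.cong) auto
  then have "w_partial_sum (\<lambda>m. if m = 0 then 1 else 0) L = w 0" for L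
    by (simp add: fun_eq_iff)
  then show ?thesis
    by (simp add: has_expansion_def w_L2rv)
qed

lemma x_tail_diff_in_span_future: "1 \<le> k \<Longrightarrow> x_tail_diff n k \<in> lin_span_rv future"
proof (induction n arbitrary: k)
  case 0
  have "(\<lambda>\<omega>. (1 / (1 + real l)) * w (int k - int l) \<omega>) \<in> lin_span_rv future" if "l < k" for l
    using that by (intro lin_span_rv_cmult lin_span_rv_base) auto
  then have "(\<lambda>\<omega>. \<Sum>l<k. w (int k - int l) \<omega> / (1 + real l)) \<in> lin_span_rv future"
    using lin_span_rv_sum[of "{..<k}" "\<lambda>l \<omega>. (1 / (1 + real l)) * w (int k - int l) \<omega>"] by simp
  moreover have "x (int k) \<in> lin_span_rv future"
    using 0 by (intro lin_span_rv_base) auto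
  ultimately show ?case
    by (simp add: x_tail_def lin_span_rv_diff)
next
  case (Suc n)
  then show ?case
    by (simp add: lin_span_rv_diff)
qed

lemma x0_minus_x_tail_diff_in_span_future: "(\<lambda>\<omega>. x 0 \<omega> - x_tail_diff n 0 \<omega>) \<in> lin_span_rv future"
proof (induction n)
  case 0
  then show ?case
    by (simp add: x_tail_def lin_span_rv_zero)
next
  case (Suc n)
  then show ?case
    using lin_span_rv_add[OF Suc x_tail_diff_in_span_future[of 1 n]] by (simp add: algebra_simps)
qed

lemma x0_in_closed_span_future: "x 0 \<in> closed_span_L2 M future"
proof (rule closed_span_L2I[where h = "\<lambda>n \<omega>. x 0 \<omega> - x_tail_diff n 0 \<omega>"
      and b = "\<lambda>n. 2 * (1 / (real n + 1))^2 * (\<Sum>m. 1 / (real m + 1)^2)"])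
  show "(\<integral>\<omega>. (x 0 \<omega> - (x 0 \<omega> - x_tail_diff n 0 \<omega>))^2 \<partial>M)
      \<le> 2 * (1 / (real n + 1))^2 * (\<Sum>m. 1 / (real m + 1)^2)" for n
  proof -
    have "\<bar>beta_coeff n m\<bar> \<le> (1 / (real n + 1)) / (real m + 1)" for m
      using beta_coeff_le[of n m] beta_coeff_nonneg[of n m] by simp
    then show ?thesis
      using has_expansion_integral_sq_le[OF has_expansion_x_tail_diff[of n 0]] by simp
  qed
  have "(\<lambda>n. 2 * (1 / (real n + 1))^2 * (\<Sum>m. 1 / (real m + 1)^2))
      \<longlonglongrightarrow> 2 * 0^2 * (\<Sum>m. 1 / (real m + 1)^2)"
    by (intro tendsto_intros tendsto_const_div_Suc)
  then show "(\<lambda>n. 2 * (1 / (real n + 1))^2 * (\<Sum>m. 1 / (real m + 1)^2)) \<longlonglongrightarrow> 0"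
    by simp
qed (simp_all add: x_L2rv x0_minus_x_tail_diff_in_span_future)

lemma w0_in_closed_span_future: "w 0 \<in> closed_span_L2 M future"
proof (rule closed_span_L2I[where h = "\<lambda>n \<omega>. ((real n + 1) * (real n + 2)) * x_tail_diff n 1 \<omega>"
      and b = "\<lambda>n. 2 * (6 / (real n + 1))^2 * (\<Sum>m. 1 / (real m + 1)^2)"])
  show "(\<integral>\<omega>. (w 0 \<omega> - (real n + 1) * (real n + 2) * x_tail_diff n 1 \<omega>)^2 \<partial>M)
      \<le> 2 * (6 / (real n + 1))^2 * (\<Sum>m. 1 / (real m + 1)^2)" for n
  proof -
    define c where "c = (real n + 1) * (real n + 2)"
    have "\<bar>(if m = 0 then 1 else 0) - c * beta_coeff n (m + 1)\<bar> \<le> (6 / (real n + 1)) / (real m + 1)" for m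
    proof (cases m)
      case 0
      then show ?thesis
        using beta_coeff_1[of n] by (simp add: c_def)
    next
      case (Suc j)
      have "0 \<le> c * beta_coeff n (m + 1)"
        by (simp add: c_def beta_coeff_nonneg)
      moreover have "c * beta_coeff n (m + 1) \<le> 6 / ((real n + 1) * (real j + 2))"
        using beta_coeff_Suc_Suc_le[of n j] Suc by (simp add: c_def)
      ultimately show ?thesis
        using Suc by (simp add: divide_divide_eq_left add.commute)
    qed
    then show ?thesis
      using has_expansion_integral_sq_le[OF has_expansion_diff[OF has_expansion_w0
          has_expansion_cmult[OF has_expansion_x_tail_diff[of n 1], of c]]]
      by (simp add: c_def)
  qed
  have "(\<lambda>n. 2 * (6 / (real n + 1))^2 * (\<Sum>m. 1 / (real m + 1)^2))
      \<longlonglongrightarrow> 2 * 0^2 * (\<Sum>m. 1 / (real m + 1)^2)"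
    by (intro tendsto_intros tendsto_const_div_Suc)
  then show "(\<lambda>n. 2 * (6 / (real n + 1))^2 * (\<Sum>m. 1 / (real m + 1)^2)) \<longlonglongrightarrow> 0"
    by simp
qed (simp_all add: w_L2rv lin_span_rv_cmult x_tail_diff_in_span_future)

theorem backward_inf:
  "is_loewner_inf {err_cov M xi xih | xih. \<forall>i. (\<lambda>\<omega>. xih \<omega> $ i) \<in> closed_span_L2 M future} 0"
proof (rule is_loewner_infI_least)
  have "err_cov M xi xi = 0"
    by (simp add: err_cov_def vec_eq_iff)
  moreover have "(\<lambda>\<omega>. xi \<omega> $ i) \<in> closed_span_L2 M future" for i
    using x0_in_closed_span_future w0_in_closed_span_future by (cases "i = 1") simp_all
  ultimately show "0 \<in> {err_cov M xi xih | xih. \<forall>i. (\<lambda>\<omega>. xih \<omega> $ i) \<in> closed_span_L2 M future}"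
    by (auto intro!: exI[of _ xi])
  show "symmetric_mat 0"
    by (simp add: symmetric_mat_def transpose_def vec_eq_iff)
qed (blast intro: loewner_le_zero_err_cov xi_minus_L2rv closed_span_L2_L2rv)

end

theorem mainTheorem8:
  fixes M :: "'a measure" and w x :: "int \<Rightarrow> 'a \<Rightarrow> real"
  assumes "prob_space M"
    and gauss: "\<And>k. distributed M lborel (w k) std_normal_density"
    and indep: "prob_space.indep_vars M (\<lambda>_. borel) w UNIV"
    and x_L2: "\<And>k. x k \<in> L2rv M"
    and x_series: "\<And>k. (\<lambda>n. \<integral>\<omega>. (x k \<omega> - (w k \<omega> +
            (\<Sum>l=1..n. w (k - int l) \<omega> / (1 + real l))))^2 \<partial>M) \<longlonglongrightarrow> 0"
  shows "is_loewner_inf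
           {err_cov M (\<lambda>\<omega>. \<chi> i. if i = 1 then x 0 \<omega> else w 0 \<omega>) xih | xih.
              \<forall>i. (\<lambda>\<omega>. xih \<omega> $ i) \<in> closed_span_L2 M ({x k | k. k \<le> -1} \<union> {w k | k. k \<le> -1})}
           (\<chi> i j. 1)
       \<and> is_loewner_inf
           {err_cov M (\<lambda>\<omega>. \<chi> i. if i = 1 then x 0 \<omega> else w 0 \<omega>) xih | xih.
              \<forall>i. (\<lambda>\<omega>. xih \<omega> $ i) \<in> closed_span_L2 M ({x k | k. k \<ge> 1} \<union> {w k | k. k \<ge> 1})}
           0"
proof -
  interpret prob_space M
    by fact
  interpret orthonormal_seq M w
    using gauss indep by (rule orthonormal_seq_std_normal)
  interpret harmonic_ma M w x
    by unfold_locales (fact x_L2 x_series)+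
  show ?thesis
    using forward_inf backward_inf ..
qed

end
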